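(* In a multi-channel single-hop radio network with $b$ channels in which at most $k$ stations are activated spontaneously (at arbitrary times), the randomized algorithm Channel-Screening — in which, in every round, each active station independently for each channel $\beta\in\{1,\dots,b\}$ transmits on channel $\beta$ with probability $k^{-\beta/b}$, until a message is heard on some channel — wakes up the network within $\mathcal O(k^{1/b}\ln\frac{1}{\epsilon})$ time steps (counted from the first spontaneous activation) with probability at least $1-\epsilon$, for every $0<\epsilon<1$.
   Context: Model: $n$ stations and $b$ channels numbered $1,\dots,b$; time is divided into synchronous rounds; each active station may transmit on any subset of channels per round and all stations listen to all channels. A message on a channel in a round is heard by all stations iff exactly one station transmits on that channel in that round; there is no collision detection. Initially all stations are passive; at most $k$ stations become active spontaneously at arbitrary time steps; $k$ and $b$ are known, $n$ need not be. The network is woken up at the first time step at which some channel carries a transmission of exactly one station. All random choices are independent. *)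

theory Defs
  imports "HOL-Probability.Probability"
begin

text \<open>Stations are identified by natural numbers; S is the (finite) set of stations that
  ever become active spontaneously, and a s is the activation round of station s.
  Passive stations never transmit, so only stations in S matter.\<close>

definition cs_prob :: "nat \<Rightarrow> nat \<Rightarrow> nat \<Rightarrow> real" where
  "cs_prob k b \<beta> = real k powr (- real \<beta> / real b)"

text \<open>All random choices: one independent coin per (station, round, channel), for the
  rounds 0..<N. Coin true = the station transmits on that channel in that round
  (if it is active then).\<close>
definition coin_space :: "nat set \<Rightarrow> nat \<Rightarrow> nat \<Rightarrow> nat \<Rightarrow> (nat \<times> nat \<times> nat \<Rightarrow> bool) pmf" where
  "coin_space S N k b =
     Pi_pmf (S \<times> {..<N} \<times> {1..b}) False (\<lambda>(s, t, \<beta>). bernoulli_pmf (cs_prob k b \<beta>))"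

definition transmits :: "(nat \<Rightarrow> nat) \<Rightarrow> (nat \<times> nat \<times> nat \<Rightarrow> bool) \<Rightarrow> nat \<Rightarrow> nat \<Rightarrow> nat \<Rightarrow> bool" where
  "transmits a \<omega> s t \<beta> \<longleftrightarrow> a s \<le> t \<and> \<omega> (s, t, \<beta>)"

definition heard :: "nat set \<Rightarrow> (nat \<Rightarrow> nat) \<Rightarrow> (nat \<times> nat \<times> nat \<Rightarrow> bool) \<Rightarrow> nat \<Rightarrow> nat \<Rightarrow> bool" where
  "heard S a \<omega> t \<beta> \<longleftrightarrow> card {s \<in> S. transmits a \<omega> s t \<beta>} = 1"

definition first_act :: "nat set \<Rightarrow> (nat \<Rightarrow> nat) \<Rightarrow> nat" where
  "first_act S a = Min (a ` S)"

definition woken_within :: "nat set \<Rightarrow> (nat \<Rightarrow> nat) \<Rightarrow> nat \<Rightarrow> nat \<Rightarrow> (nat \<times> nat \<times> nat \<Rightarrow> bool) \<Rightarrow> bool" where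
  "woken_within S a b T \<omega> \<longleftrightarrow>
     (\<exists>t \<in> {first_act S a..<first_act S a + T}. \<exists>\<beta> \<in> {1..b}. heard S a \<omega> t \<beta>)"

end

theory Submission
  imports Defs
begin

text \<open>In any round after the first activation some \<open>m\<close> stations with \<open>1 \<le> m \<le> k\<close> are
  active. Consecutive channels differ by the factor \<open>q = k powr (-1/b)\<close>, so some channel has
  transmission probability \<open>p \<le> 1/m\<close> with \<open>q \<le> m p\<close>, and a message is heard there with
  probability \<open>m p (1 - p) ^ (m - 1) \<ge> q / e\<close>. Distinct rounds use disjoint sets of independent
  coins, so the network sleeps through \<open>T\<close> rounds with probability at most
  \<open>(1 - q/e) ^ T \<le> exp (- T q / e)\<close>, which is at most \<open>\<epsilon>\<close> once \<open>T \<ge> e ln (1/\<epsilon>) / q\<close>.\<close>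

definition depends_only_on :: "('i \<Rightarrow> 'v) set \<Rightarrow> 'i set \<Rightarrow> bool" where
  "depends_only_on X G \<longleftrightarrow> (\<forall>f g. (\<forall>x\<in>G. f x = g x) \<longrightarrow> (f \<in> X \<longleftrightarrow> g \<in> X))"

lemma depends_only_onD:
  "depends_only_on X G \<Longrightarrow> (\<And>x. x \<in> G \<Longrightarrow> f x = g x) \<Longrightarrow> f \<in> X \<longleftrightarrow> g \<in> X"
  unfolding depends_only_on_def by blast

lemma depends_only_on_UNIV: "depends_only_on UNIV G"
  by (simp add: depends_only_on_def)

lemma depends_only_on_INT:
  fixes E :: "'j \<Rightarrow> ('i \<Rightarrow> 'v) set"
  assumes "\<And>j. j \<in> J \<Longrightarrow> depends_only_on (E j) (G j)" "\<And>j. j \<in> J \<Longrightarrow> G j \<subseteq> H"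
  shows "depends_only_on (\<Inter>j\<in>J. E j) H"
  unfolding depends_only_on_def
proof (intro allI impI)
  fix f g :: "'i \<Rightarrow> 'v" assume "\<forall>x\<in>H. f x = g x"
  then have "f \<in> E j \<longleftrightarrow> g \<in> E j" if "j \<in> J" for j
    using that assms by (intro depends_only_onD) auto
  then show "f \<in> (\<Inter>j\<in>J. E j) \<longleftrightarrow> g \<in> (\<Inter>j\<in>J. E j)" by blast
qed

lemma measure_pair_pmf_Times:
  "measure_pmf.prob (pair_pmf M N) (X \<times> Y) = measure_pmf.prob M X * measure_pmf.prob N Y"
proof -
  have "(X \<times> Y) \<inter> set_pmf (pair_pmf M N) = (X \<inter> set_pmf M) \<times> (Y \<inter> set_pmf N)"
    by auto
  then have "measure_pmf.prob (pair_pmf M N) (X \<times> Y)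
               = measure_pmf.prob (pair_pmf M N) ((X \<inter> set_pmf M) \<times> (Y \<inter> set_pmf N))"
    by (metis measure_Int_set_pmf)
  also have "\<dots> = measure_pmf.prob M (X \<inter> set_pmf M) * measure_pmf.prob N (Y \<inter> set_pmf N)"
    by (rule measure_pmf_prob_product) (auto intro: countable_subset)
  finally show ?thesis by (simp add: measure_Int_set_pmf)
qed

lemma measure_Pi_pmf_Int_split:
  assumes "finite A" "G \<subseteq> A" "depends_only_on X G" "depends_only_on Y (A - G)"
  shows "measure_pmf.prob (Pi_pmf A d p) (X \<inter> Y)
           = measure_pmf.prob (Pi_pmf G d p) X * measure_pmf.prob (Pi_pmf (A - G) d p) Y"
proof -
  let ?merge = "\<lambda>(f, g) x. if x \<in> G then f x else g x"
  have "Pi_pmf A d p = Pi_pmf (G \<union> (A - G)) d p"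
    using assms(2) by (simp add: Un_absorb1)
  also have "\<dots> = map_pmf ?merge (pair_pmf (Pi_pmf G d p) (Pi_pmf (A - G) d p))"
    using assms(1,2) by (intro Pi_pmf_union) (auto dest: finite_subset)
  finally have A: "Pi_pmf A d p = \<dots>" .
  have "?merge (f, g) \<in> X \<longleftrightarrow> f \<in> X" for f g
    by (rule depends_only_onD[OF assms(3)]) simp
  moreover have "?merge (f, g) \<in> Y \<longleftrightarrow> g \<in> Y" for f g
    by (rule depends_only_onD[OF assms(4)]) simp
  ultimately have "?merge -` (X \<inter> Y) = X \<times> Y"
    by auto
  then show ?thesis
    by (simp add: A measure_pair_pmf_Times)
qed

lemma measure_Pi_pmf_INT_disjoint_supports:
  assumes "finite A" "finite J" "\<And>j. j \<in> J \<Longrightarrow> G j \<subseteq> A"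
    and "disjoint_family_on G J" "\<And>j. j \<in> J \<Longrightarrow> depends_only_on (E j) (G j)"
  shows "measure_pmf.prob (Pi_pmf A d p) (\<Inter>j\<in>J. E j)
           = (\<Prod>j\<in>J. measure_pmf.prob (Pi_pmf A d p) (E j))"
  using assms(2-5)
proof (induction J rule: finite_induct)
  case (insert j J)
  let ?P = "measure_pmf.prob (Pi_pmf A d p)"
  have G: "G j \<subseteq> A" and E: "depends_only_on (E j) (G j)"
    using insert.prems by auto
  have R: "depends_only_on (\<Inter>i\<in>J. E i) (A - G j)"
  proof (rule depends_only_on_INT)
    fix i assume "i \<in> J"
    with insert show "depends_only_on (E i) (G i)" "G i \<subseteq> A - G j"
      by (auto simp: disjoint_family_on_def)
  qed
  have "?P (E j \<inter> (\<Inter>i\<in>J. E i))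
          = measure_pmf.prob (Pi_pmf (G j) d p) (E j)
            * measure_pmf.prob (Pi_pmf (A - G j) d p) (\<Inter>i\<in>J. E i)"
    using assms(1) G E R by (rule measure_Pi_pmf_Int_split)
  also have "\<dots> = ?P (E j) * ?P (\<Inter>i\<in>J. E i)"
    using measure_Pi_pmf_Int_split[OF assms(1) G E depends_only_on_UNIV]
      measure_Pi_pmf_Int_split[OF assms(1) G depends_only_on_UNIV R]
    by simp
  moreover have "disjoint_family_on G J"
    using insert.prems(2) by (rule disjoint_family_on_mono[rotated]) auto
  ultimately show ?case
    using insert by simp
qed simp

lemma measure_Pi_pmf_card_true_eq_1:
  assumes "finite I" "X \<subseteq> I" "\<And>x. x \<in> X \<Longrightarrow> D x = bernoulli_pmf p" "0 \<le> p" "p \<le> 1"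
  shows "measure_pmf.prob (Pi_pmf I dflt D) {\<omega>. card {x\<in>X. \<omega> x} = 1}
           = real (card X) * p * (1 - p) ^ (card X - 1)"
proof -
  have fX: "finite X" using assms(1,2) by (rule finite_subset[rotated])
  have "map_pmf (\<lambda>\<omega>. card {x\<in>X. \<omega> x}) (Pi_pmf I dflt D)
          = map_pmf (\<lambda>\<omega>. card {x\<in>X. \<omega> x}) (Pi_pmf X dflt D)"
    by (simp add: Pi_pmf_subset[OF assms(1,2)] map_pmf_comp cong: conj_cong)
  also have "Pi_pmf X dflt D = Pi_pmf X dflt (\<lambda>_. bernoulli_pmf p)"
    using assms(3) by (intro Pi_pmf_cong) auto
  also have "map_pmf (\<lambda>\<omega>. card {x\<in>X. \<omega> x}) \<dots> = binomial_pmf (card X) p"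
    using fX assms(4,5) by (intro binomial_pmf_altdef'[symmetric]) auto
  finally have "measure_pmf.prob (Pi_pmf I dflt D) ((\<lambda>\<omega>. card {x\<in>X. \<omega> x}) -` {1})
                  = pmf (binomial_pmf (card X) p) 1"
    by (simp add: measure_pmf_single flip: measure_map_pmf)
  then show ?thesis using assms(4,5) by (simp add: vimage_def)
qed

lemma exp_minus_one_le_power_one_minus:
  fixes p :: real
  assumes "0 \<le> p" "p \<le> 1 / real m" "1 \<le> m"
  shows "exp (-1) \<le> (1 - p) ^ (m - 1)"
proof (cases "m = 1")
  case False
  define n where "n = m - 1"
  have n: "0 < n" "real m = real n + 1"
    using False assms(3) by (auto simp: n_def)
  have "exp (-1) = inverse (exp 1 :: real)"
    by (simp add: exp_minus)
  also have "\<dots> \<le> inverse ((1 + 1 / real n) ^ n)"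
    using exp_ge_one_plus_x_over_n_power_n[of n 1] n by (intro le_imp_inverse_le zero_less_power) (auto intro: add_pos_nonneg)
  also have "\<dots> = (1 - 1 / real m) ^ n"
    using n by (simp add: power_inverse field_simps)
  also have "\<dots> \<le> (1 - p) ^ n"
    using assms n by (intro power_mono) (auto simp: field_simps)
  finally show ?thesis by (simp add: n_def)
qed simp

lemma power_one_minus_le_of_ln_le:
  fixes q \<epsilon> :: real
  assumes "0 \<le> q" "q \<le> 1" "0 < \<epsilon>" "ln (1 / \<epsilon>) \<le> q * real T"
  shows "(1 - q) ^ T \<le> \<epsilon>"
proof -
  have "(1 - q) ^ T \<le> exp (- q) ^ T"
    using assms(2) by (intro power_mono) (auto simp: exp_ge_add_one_self[of "-q", simplified])
  also have "\<dots> = exp (- (q * real T))"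
    by (simp add: exp_of_nat_mult[symmetric] mult.commute)
  also have "\<dots> \<le> exp (- ln (1 / \<epsilon>))"
    using assms(4) by simp
  also have "\<dots> = \<epsilon>"
    using assms(3) by (simp add: ln_div)
  finally show ?thesis .
qed

lemma cs_prob_nonneg: "0 \<le> cs_prob k b \<beta>"
  by (simp add: cs_prob_def)

lemma cs_prob_le_1:
  assumes "1 \<le> k"
  shows "cs_prob k b \<beta> \<le> 1"
proof -
  have "real k powr (- real \<beta> / real b) \<le> real k powr 0"
    using assms by (intro powr_mono) (auto simp: divide_nonpos_nonneg)
  then show ?thesis
    using assms by (simp add: cs_prob_def)
qed

lemma cs_prob_add: "0 < k \<Longrightarrow> cs_prob k b (\<beta> + \<gamma>) = cs_prob k b \<beta> * cs_prob k b \<gamma>"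
  unfolding cs_prob_def by (simp add: powr_add[symmetric] add_divide_distrib diff_divide_distrib)

lemma cs_prob_self: "0 < k \<Longrightarrow> 0 < b \<Longrightarrow> cs_prob k b b = 1 / real k"
  unfolding cs_prob_def by (simp add: powr_minus_divide)

lemma exists_channel_cs_prob_inverse:
  assumes "1 \<le> m" "m \<le> k" "1 \<le> b"
  shows "\<exists>\<beta>\<in>{1..b}. cs_prob k b \<beta> \<le> 1 / real m \<and> cs_prob k b 1 \<le> real m * cs_prob k b \<beta>"
proof -
  define P where "P \<beta> \<longleftrightarrow> 1 \<le> \<beta> \<and> real m * cs_prob k b \<beta> \<le> 1" for \<beta>
  have k: "0 < k" using assms by simp
  have "P b"
    using assms by (simp add: P_def cs_prob_self)
  define \<beta> where "\<beta> = (LEAST \<beta>. P \<beta>)"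
  have P\<beta>: "P \<beta>" and \<beta>b: "\<beta> \<le> b"
    using \<open>P b\<close> unfolding \<beta>_def by (auto intro: LeastI Least_le)
  have "cs_prob k b 1 \<le> real m * cs_prob k b \<beta>"
  proof (cases "\<beta> = 1")
    case True
    then show ?thesis
      using assms(1) cs_prob_nonneg[of k b 1] by (simp add: mult_le_cancel_right1)
  next
    case False
    \<comment> \<open>By minimality channel \<open>\<beta> - 1\<close> is too crowded, and its probability differs
       from that of \<open>\<beta>\<close> only by the factor \<open>cs_prob k b 1\<close>.\<close>
    have "\<beta> - 1 < \<beta>"
      using P\<beta> by (simp add: P_def)
    then have "\<not> P (\<beta> - 1)"
      unfolding \<beta>_def by (rule not_less_Least)
    then have "1 < real m * cs_prob k b (\<beta> - 1)"
      using False P\<beta> by (auto simp: P_def not_le)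
    moreover have "cs_prob k b \<beta> = cs_prob k b (\<beta> - 1) * cs_prob k b 1"
      using cs_prob_add[OF k, of b "\<beta> - 1" 1] False P\<beta> by (simp add: P_def)
    ultimately show ?thesis
      using mult_right_mono[of 1 "real m * cs_prob k b (\<beta> - 1)" "cs_prob k b 1"]
      by (simp add: cs_prob_nonneg mult.assoc)
  qed
  moreover have "cs_prob k b \<beta> \<le> 1 / real m"
    using P\<beta> assms(1) by (simp add: P_def field_simps)
  ultimately show ?thesis
    using P\<beta> \<beta>b by (auto simp: P_def)
qed

lemma measure_heard:
  assumes "finite S" "t < N" "\<beta> \<in> {1..b}" "1 \<le> k"
  shows "measure_pmf.prob (coin_space S N k b) {\<omega>. heard S a \<omega> t \<beta>}
           = real (card {s\<in>S. a s \<le> t}) * cs_prob k b \<beta>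
             * (1 - cs_prob k b \<beta>) ^ (card {s\<in>S. a s \<le> t} - 1)"
proof -
  define X where "X = {s\<in>S. a s \<le> t} \<times> {t} \<times> {\<beta>}"
  have "{x\<in>X. \<omega> x} = (\<lambda>s. (s, t, \<beta>)) ` {s\<in>S. transmits a \<omega> s t \<beta>}" for \<omega>
    by (auto simp: X_def transmits_def)
  then have "heard S a \<omega> t \<beta> \<longleftrightarrow> card {x\<in>X. \<omega> x} = 1" for \<omega>
    by (simp add: heard_def card_image inj_on_def)
  moreover have "card X = card {s\<in>S. a s \<le> t}"
    by (simp add: X_def card_cartesian_product)
  moreover have "measure_pmf.prob (coin_space S N k b) {\<omega>. card {x\<in>X. \<omega> x} = 1}
                   = real (card X) * cs_prob k b \<beta> * (1 - cs_prob k b \<beta>) ^ (card X - 1)"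
    unfolding coin_space_def
    using assms by (intro measure_Pi_pmf_card_true_eq_1) (auto simp: X_def cs_prob_nonneg cs_prob_le_1)
  ultimately show ?thesis
    by simp
qed

definition silent_round :: "nat set \<Rightarrow> (nat \<Rightarrow> nat) \<Rightarrow> nat \<Rightarrow> nat \<Rightarrow> (nat \<times> nat \<times> nat \<Rightarrow> bool) set" where
  "silent_round S a b t = {\<omega>. \<forall>\<beta>\<in>{1..b}. \<not> heard S a \<omega> t \<beta>}"

lemma silent_round_depends_only_on: "depends_only_on (silent_round S a b t) (S \<times> {t} \<times> {1..b})"
  unfolding depends_only_on_def
proof (intro allI impI)
  fix f g :: "nat \<times> nat \<times> nat \<Rightarrow> bool"
  assume "\<forall>x\<in>S \<times> {t} \<times> {1..b}. f x = g x"
  then have "{s\<in>S. transmits a f s t \<beta>} = {s\<in>S. transmits a g s t \<beta>}" if "\<beta> \<in> {1..b}" for \<beta>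
    using that by (auto simp: transmits_def)
  then show "f \<in> silent_round S a b t \<longleftrightarrow> g \<in> silent_round S a b t"
    by (simp add: silent_round_def heard_def)
qed

lemma measure_silent_round_le:
  assumes "finite S" "S \<noteq> {}" "card S \<le> k" "1 \<le> b" "first_act S a \<le> t" "t < N"
  shows "measure_pmf.prob (coin_space S N k b) (silent_round S a b t) \<le> 1 - cs_prob k b 1 * exp (-1)"
proof -
  define m where "m = card {s\<in>S. a s \<le> t}"
  have "first_act S a \<in> a ` S"
    unfolding first_act_def using assms(1,2) by (intro Min_in) auto
  then obtain s where "s \<in> S" "a s = first_act S a"
    by auto
  then have "1 \<le> m"
    using assms(1,5) by (auto simp: m_def Suc_le_eq card_gt_0_iff)
  moreover have "m \<le> k"
    using assms(1,3) card_mono[of S "{s\<in>S. a s \<le> t}"] by (auto simp: m_def)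
  ultimately obtain \<beta> where \<beta>: "\<beta> \<in> {1..b}" and p_le: "cs_prob k b \<beta> \<le> 1 / real m"
    and p_ge: "cs_prob k b 1 \<le> real m * cs_prob k b \<beta>"
    using exists_channel_cs_prob_inverse assms(4) by blast
  have "cs_prob k b 1 * exp (-1) \<le> real m * cs_prob k b \<beta> * (1 - cs_prob k b \<beta>) ^ (m - 1)"
    using p_ge exp_minus_one_le_power_one_minus[OF cs_prob_nonneg p_le \<open>1 \<le> m\<close>]
    by (intro mult_mono) (auto simp: cs_prob_nonneg)
  also have "\<dots> = measure_pmf.prob (coin_space S N k b) {\<omega>. heard S a \<omega> t \<beta>}"
    using measure_heard[OF assms(1,6) \<beta>] \<open>1 \<le> m\<close> \<open>m \<le> k\<close> by (simp add: m_def)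
  also have "\<dots> \<le> 1 - measure_pmf.prob (coin_space S N k b) (silent_round S a b t)"
    using \<beta> measure_pmf.prob_space_axioms
    by (subst measure_pmf.prob_compl[symmetric]) (auto simp: silent_round_def intro!: measure_pmf.finite_measure_mono)
  finally show ?thesis by simp
qed

lemma measure_not_woken_within:
  fixes S :: "nat set" and a :: "nat \<Rightarrow> nat"
  assumes "finite S"
  defines "t\<^sub>0 \<equiv> first_act S a"
  shows "measure_pmf.prob (coin_space S (t\<^sub>0 + T) k b) (- {\<omega>. woken_within S a b T \<omega>})
           = (\<Prod>t\<in>{t\<^sub>0..<t\<^sub>0 + T}. measure_pmf.prob (coin_space S (t\<^sub>0 + T) k b) (silent_round S a b t))"
proof -
  have "- {\<omega>. woken_within S a b T \<omega>} = (\<Inter>t\<in>{t\<^sub>0..<t\<^sub>0 + T}. silent_round S a b t)"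
    by (auto simp: woken_within_def silent_round_def t\<^sub>0_def)
  then show ?thesis
    unfolding coin_space_def using assms(1)
    by (simp only:, intro measure_Pi_pmf_INT_disjoint_supports[where G = "\<lambda>t. S \<times> {t} \<times> {1..b}"])
       (use silent_round_depends_only_on in \<open>auto simp: disjoint_family_on_def\<close>)
qed

lemma measure_woken_within_ge:
  assumes "finite S" "S \<noteq> {}" "card S \<le> k" "1 \<le> b"
  shows "1 - (1 - cs_prob k b 1 * exp (-1)) ^ T
           \<le> measure_pmf.prob (coin_space S (first_act S a + T) k b) {\<omega>. woken_within S a b T \<omega>}"
proof -
  let ?P = "measure_pmf.prob (coin_space S (first_act S a + T) k b)"
  have "?P (- {\<omega>. woken_within S a b T \<omega>})
          = (\<Prod>t\<in>{first_act S a..<first_act S a + T}. ?P (silent_round S a b t))"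
    using assms(1) by (rule measure_not_woken_within)
  also have "\<dots> \<le> (\<Prod>t\<in>{first_act S a..<first_act S a + T}. 1 - cs_prob k b 1 * exp (-1))"
    using measure_silent_round_le[OF assms] by (intro prod_mono) auto
  finally show ?thesis
    using measure_pmf.prob_compl[of "{\<omega>. woken_within S a b T \<omega>}"] by (simp add: Compl_eq_Diff_UNIV)
qed

theorem theorem2:
  "\<exists>C > 0. \<forall>(S :: nat set) (a :: nat \<Rightarrow> nat) (k :: nat) (b :: nat) (\<epsilon> :: real) (T :: nat).
     finite S \<longrightarrow> S \<noteq> {} \<longrightarrow> card S \<le> k \<longrightarrow> 1 \<le> b \<longrightarrow> 0 < \<epsilon> \<longrightarrow> \<epsilon> < 1 \<longrightarrow>
     C * real k powr (1 / real b) * ln (1 / \<epsilon>) \<le> real T \<longrightarrow>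
     measure_pmf.prob (coin_space S (first_act S a + T) k b) {\<omega>. woken_within S a b T \<omega>}
       \<ge> 1 - \<epsilon>"
proof (intro exI[of _ "exp 1"] conjI allI impI)
  fix S :: "nat set" and a :: "nat \<Rightarrow> nat" and k b :: nat and \<epsilon> :: real and T :: nat
  assume S: "finite S" "S \<noteq> {}" "card S \<le> k" and b: "1 \<le> b" and \<epsilon>: "0 < \<epsilon>" "\<epsilon> < 1"
    and T: "exp 1 * real k powr (1 / real b) * ln (1 / \<epsilon>) \<le> real T"
  define q where "q = cs_prob k b 1 * exp (-1)"
  have "0 < k"
    using S card_gt_0_iff by fastforce
  then have "q * (exp 1 * real k powr (1 / real b)) = 1"
    by (simp add: q_def cs_prob_def powr_minus exp_minus field_simps)
  then have "q * (exp 1 * real k powr (1 / real b) * ln (1 / \<epsilon>)) = ln (1 / \<epsilon>)"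
    by (metis mult.assoc mult_1)
  moreover have "0 \<le> q" "q \<le> 1"
    using \<open>0 < k\<close> cs_prob_le_1[of k b 1] by (simp_all add: q_def cs_prob_nonneg mult_le_one)
  ultimately have "ln (1 / \<epsilon>) \<le> q * real T"
    using mult_left_mono[OF T \<open>0 \<le> q\<close>] by linarith
  then have "(1 - q) ^ T \<le> \<epsilon>"
    using \<open>0 \<le> q\<close> \<open>q \<le> 1\<close> \<epsilon>(1) by (intro power_one_minus_le_of_ln_le)
  then show "1 - \<epsilon> \<le> measure_pmf.prob (coin_space S (first_act S a + T) k b) {\<omega>. woken_within S a b T \<omega>}"
    using measure_woken_within_ge[OF S b, where a = a and T = T] by (simp add: q_def)
qed simp

end
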